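(* In the two-player, two-item all-pay auction with budgets described in the context, the marginal strategies $F_{1j},F_{2j}$ induced on an item $j$ by a Nash equilibrium of the two-item game need not constitute a Nash equilibrium of the single-item game on item $j$ (the single-item all-pay auction with budgets $B_1,B_2$, valuations $v_{1j},v_{2j}$, and the same tie-breaking rule). That is, there exist a two-item game, a Nash equilibrium of it, and an item $j\in\{1,2\}$ for which the induced marginals on item $j$ are not a Nash equilibrium of that single-item game.
   Context: Multi-item all-pay auction with budgets. Two players $i\in\{1,2\}$ ($-i$ is the opponent of $i$) and $n$ items $j\in\{1,\dots,n\}$. Player $i$ has budget $B_i\ge0$ and values item $j$ at $v_{ij}>0$. A pure strategy of player $i$ is a vector $(x_{i1},\dots,x_{in})$ with all $x_{ij}\ge0$ and $\sum_j x_{ij}\le B_i$; a mixed strategy is a probability distribution over this set, and $F_{ij}$ denotes its marginal distribution on item $j$. On each item $j$ the higher bid wins the item. Tie-breaking on item $j$: if $x_{1j}=x_{2j}=\min\{B_1,B_2,v_{1j},v_{2j}\}$ and $\min\{B_i,v_{ij}\}>\min\{B_{-i},v_{-ij}\}$ for some $i$, then player $i$ wins item $j$; in all other ties each player wins item $j$ with probability $\frac12$. Player $i$'s utility on item $j$ is $v_{ij}-x_{ij}$ if he wins it and $-x_{ij}$ otherwise, and his total utility is the sum over items. A Nash equilibrium is a pair of mixed strategies in which each player's strategy maximizes his expected total utility against the other's, over all mixed strategies satisfying his budget constraint. The single-item game on item $j$ is the case $n=1$ with valuations $v_{1j},v_{2j}$ and budgets $B_1,B_2$ (pure strategies are bids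 in $[0,B_i]$). Here $n=2$. *)

theory Defs
  imports "HOL-Probability.Probability"
begin

text \<open>Probability that player 1 wins an item, given budgets B1 B2, the two
players' valuations w1 w2 of this item, player 1's bid x and player 2's bid y
(including the tie-breaking rule).\<close>
definition win1 :: "real \<Rightarrow> real \<Rightarrow> real \<Rightarrow> real \<Rightarrow> real \<Rightarrow> real \<Rightarrow> real" where
  "win1 B1 B2 w1 w2 x y =
     (if y < x then 1
      else if x < y then 0
      else if x = min B1 (min B2 (min w1 w2)) \<and> min B2 w2 < min B1 w1 then 1
      else if x = min B1 (min B2 (min w1 w2)) \<and> min B1 w1 < min B2 w2 then 0
      else 1/2)"

definition util1_single :: "real \<Rightarrow> real \<Rightarrow> real \<Rightarrow> real \<Rightarrow> real \<Rightarrow> real \<Rightarrow> real" where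
  "util1_single B1 B2 w1 w2 x y = w1 * win1 B1 B2 w1 w2 x y - x"

definition util2_single :: "real \<Rightarrow> real \<Rightarrow> real \<Rightarrow> real \<Rightarrow> real \<Rightarrow> real \<Rightarrow> real" where
  "util2_single B1 B2 w1 w2 x y = w2 * (1 - win1 B1 B2 w1 w2 x y) - y"

text \<open>Two-item game: pure strategies are pairs (bid on item 1, bid on item 2).
 v11 v12: valuations of player 1; v21 v22: valuations of player 2.\<close>
definition util1_two :: "real \<Rightarrow> real \<Rightarrow> real \<Rightarrow> real \<Rightarrow> real \<Rightarrow> real \<Rightarrow>
    real \<times> real \<Rightarrow> real \<times> real \<Rightarrow> real" where
  "util1_two B1 B2 v11 v12 v21 v22 x y =
     util1_single B1 B2 v11 v21 (fst x) (fst y) + util1_single B1 B2 v12 v22 (snd x) (snd y)"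

definition util2_two :: "real \<Rightarrow> real \<Rightarrow> real \<Rightarrow> real \<Rightarrow> real \<Rightarrow> real \<Rightarrow>
    real \<times> real \<Rightarrow> real \<times> real \<Rightarrow> real" where
  "util2_two B1 B2 v11 v12 v21 v22 x y =
     util2_single B1 B2 v11 v21 (fst x) (fst y) + util2_single B1 B2 v12 v22 (snd x) (snd y)"

definition mixed_single :: "real \<Rightarrow> real measure \<Rightarrow> bool" where
  "mixed_single B M \<longleftrightarrow> prob_space M \<and> sets M = sets borel \<and>
     (AE x in M. 0 \<le> x \<and> x \<le> B)"

definition mixed_two :: "real \<Rightarrow> (real \<times> real) measure \<Rightarrow> bool" where
  "mixed_two B M \<longleftrightarrow> prob_space M \<and> sets M = sets borel \<and>
     (AE x in M. 0 \<le> fst x \<and> 0 \<le> snd x \<and> fst x + snd x \<le> B)"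

definition exp_util :: "('a \<Rightarrow> 'b \<Rightarrow> real) \<Rightarrow> 'a measure \<Rightarrow> 'b measure \<Rightarrow> real" where
  "exp_util u M1 M2 = (\<integral>z. u (fst z) (snd z) \<partial>(M1 \<Otimes>\<^sub>M M2))"

definition nash :: "('a measure \<Rightarrow> bool) \<Rightarrow> ('b measure \<Rightarrow> bool) \<Rightarrow>
    ('a \<Rightarrow> 'b \<Rightarrow> real) \<Rightarrow> ('a \<Rightarrow> 'b \<Rightarrow> real) \<Rightarrow> 'a measure \<Rightarrow> 'b measure \<Rightarrow> bool" where
  "nash S1 S2 u1 u2 M1 M2 \<longleftrightarrow> S1 M1 \<and> S2 M2 \<and>
     (\<forall>N. S1 N \<longrightarrow> exp_util u1 N M2 \<le> exp_util u1 M1 M2) \<and>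
     (\<forall>N. S2 N \<longrightarrow> exp_util u2 M1 N \<le> exp_util u2 M1 M2)"

definition nash_two :: "real \<Rightarrow> real \<Rightarrow> real \<Rightarrow> real \<Rightarrow> real \<Rightarrow> real \<Rightarrow>
    (real \<times> real) measure \<Rightarrow> (real \<times> real) measure \<Rightarrow> bool" where
  "nash_two B1 B2 v11 v12 v21 v22 =
     nash (mixed_two B1) (mixed_two B2)
       (util1_two B1 B2 v11 v12 v21 v22) (util2_two B1 B2 v11 v12 v21 v22)"

definition nash_single :: "real \<Rightarrow> real \<Rightarrow> real \<Rightarrow> real \<Rightarrow>
    real measure \<Rightarrow> real measure \<Rightarrow> bool" where
  "nash_single B1 B2 w1 w2 =
     nash (mixed_single B1) (mixed_single B2)
       (util1_single B1 B2 w1 w2) (util2_single B1 B2 w1 w2)"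

definition marginal :: "(real \<times> real) measure \<Rightarrow> nat \<Rightarrow> real measure" where
  "marginal M j = distr M borel (if j = 1 then fst else snd)"

end

theory Submission
  imports Defs
begin

text \<open>Let both players split their unit budget uniformly at random between the two items,
bidding \<open>(w, 1 - w)\<close> with \<open>w\<close> uniform on \<open>[0, 1]\<close>. Against this strategy a bid
\<open>a \<in> [0, 1]\<close> on either item wins with probability \<open>a\<close> (ties have probability zero), so
a bid vector \<open>x\<close> earns \<open>(v\<^sub>i\<^sub>1 - 1) x\<^sub>1 + (v\<^sub>i\<^sub>2 - 1) x\<^sub>2\<close>. With valuations 2 for
player 1 and 1 for player 2, player 1 earns \<open>x\<^sub>1 + x\<^sub>2\<close>, which the strategy maximises by
exhausting the budget, while player 2 earns 0 whatever he does: an equilibrium. Its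
marginal on item 1 is the uniform bid on \<open>[0, 1]\<close>, against which player 1 earns only
\<open>E w = 1/2\<close> in the single-item game, but 1 by bidding his whole budget.\<close>

lemma one_minus_win1_swap: "1 - win1 B1 B2 w1 w2 x y = win1 B2 B1 w2 w1 y x"
proof -
  have tie: "min B2 (min B1 (min w2 w1)) = min B1 (min B2 (min w1 w2))"
    by (metis min.commute min.assoc)
  \<comment> \<open>tie threshold and caps abstracted: \<open>auto\<close> on the raw definition splits every \<open>min\<close>\<close>
  have "1 - (if y < x then 1 else if x < y then 0 else if x = t \<and> c2 < c1 then 1
              else if x = t \<and> c1 < c2 then 0 else 1/2) =
        (if x < y then 1 else if y < x then 0 else if y = t \<and> c1 < c2 then 1
              else if y = t \<and> c2 < c1 then 0 else (1/2::real))" for t c1 c2 :: real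
    by auto
  then show ?thesis
    unfolding win1_def tie .
qed

lemma win1_bounds: "0 \<le> win1 B1 B2 w1 w2 x y" "win1 B1 B2 w1 w2 x y \<le> 1"
  unfolding win1_def by simp_all

lemma win1_distinct_bids: "x \<noteq> y \<Longrightarrow> win1 B1 B2 w1 w2 x y = of_bool (y < x)"
  unfolding win1_def by simp

lemma util2_two_swap:
  "util2_two B1 B2 v11 v12 v21 v22 x y = util1_two B2 B1 v21 v22 v11 v12 y x"
  unfolding util1_two_def util2_two_def util1_single_def util2_single_def one_minus_win1_swap ..

lemma measurable_win1[measurable]:
  assumes [measurable]: "f \<in> borel_measurable M" "g \<in> borel_measurable M"
  shows "(\<lambda>z. win1 B1 B2 w1 w2 (f z) (g z)) \<in> borel_measurable M"
  unfolding win1_def by measurable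

lemma measurable_util1_single[measurable]:
  assumes [measurable]: "f \<in> borel_measurable M" "g \<in> borel_measurable M"
  shows "(\<lambda>z. util1_single B1 B2 w1 w2 (f z) (g z)) \<in> borel_measurable M"
  unfolding util1_single_def by measurable

lemma integrable_win1:
  assumes "finite_measure M" and [measurable]: "g \<in> borel_measurable M"
  shows "integrable M (\<lambda>y. win1 B1 B2 w1 w2 a (g y))"
  using win1_bounds by (intro finite_measure.integrable_const_bound[OF assms(1), of _ 1]) auto

lemma integrable_util1_single_fixed_bid:
  assumes "finite_measure M" and "g \<in> borel_measurable M"
  shows "integrable M (\<lambda>y. util1_single B1 B2 w1 w2 a (g y))"
proof -
  have "integrable M (\<lambda>y. win1 B1 B2 w1 w2 a (g y))"
    by (rule integrable_win1[OF assms])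
  then show ?thesis
    by (simp add: util1_single_def finite_measure.integrable_const[OF assms(1)])
qed

lemma abs_util1_single_le: "\<bar>util1_single B1 B2 w1 w2 x y\<bar> \<le> \<bar>w1\<bar> + \<bar>x\<bar>"
proof -
  have "\<bar>w1 * win1 B1 B2 w1 w2 x y\<bar> \<le> \<bar>w1\<bar>"
    using win1_bounds[of B1 B2 w1 w2 x y] by (simp add: abs_mult mult_left_le)
  then show ?thesis
    unfolding util1_single_def by linarith
qed

lemma pair_prob_spaceI: "prob_space N \<Longrightarrow> prob_space M \<Longrightarrow> pair_prob_space N M"
  by (simp add: pair_prob_space_def pair_sigma_finite_def prob_space_imp_sigma_finite)

lemma integrable_pair_measure_bounded:
  fixes u :: "'a \<Rightarrow> 'b \<Rightarrow> real"
  assumes "prob_space N" "prob_space M"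
    and [measurable]: "case_prod u \<in> borel_measurable (N \<Otimes>\<^sub>M M)"
      "Measurable.pred N P" "Measurable.pred M Q"
    and "AE x in N. P x" "AE y in M. Q y"
    and bound: "\<And>x y. P x \<Longrightarrow> Q y \<Longrightarrow> \<bar>u x y\<bar> \<le> C"
  shows "integrable (N \<Otimes>\<^sub>M M) (case_prod u)"
proof -
  interpret pair_prob_space N M
    by (rule pair_prob_spaceI) fact+
  have "AE z in N \<Otimes>\<^sub>M M. P (fst z) \<and> Q (snd z)"
    by (rule AE_pair_measure) (use assms(6,7) in \<open>auto elim: eventually_mono\<close>)
  then have "AE z in N \<Otimes>\<^sub>M M. norm (case_prod u z) \<le> C"
    by eventually_elim (auto simp: bound split: prod.split)
  then show ?thesis
    by (intro P.integrable_const_bound[of _ C]) simp_all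
qed

lemma exp_util_iterated:
  fixes u :: "'a \<Rightarrow> 'b \<Rightarrow> real"
  assumes "prob_space N" "prob_space M" and int: "integrable (N \<Otimes>\<^sub>M M) (case_prod u)"
    and "g \<in> borel_measurable N" and "AE x in N. (\<integral>y. u x y \<partial>M) = g x"
  shows "exp_util u N M = integral\<^sup>L N g"
proof -
  interpret pair_prob_space N M
    by (rule pair_prob_spaceI) fact+
  have "exp_util u N M = (\<integral>x. (\<integral>y. u x y \<partial>M) \<partial>N)"
    unfolding exp_util_def using integral_fst'[OF int] by (simp add: split_beta')
  also have "\<dots> = integral\<^sup>L N g"
    using int assms(4,5) by (intro integral_cong_AE M2.borel_measurable_lebesgue_integral) auto
  finally show ?thesis .
qed

lemma exp_util_swap:
  fixes u :: "'a \<Rightarrow> 'b \<Rightarrow> real"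
  assumes "prob_space N" "prob_space M" "case_prod u \<in> borel_measurable (N \<Otimes>\<^sub>M M)"
  shows "exp_util (\<lambda>y x. u x y) M N = exp_util u N M"
proof -
  interpret pair_prob_space N M
    by (rule pair_prob_spaceI) fact+
  show ?thesis
    unfolding exp_util_def using integral_product_swap[OF assms(3)] by (simp add: split_beta')
qed

lemma measurable_case_prod_util1_single:
  fixes N M :: "real measure"
  assumes [measurable_cong]: "sets N = sets borel" "sets M = sets borel"
  shows "case_prod (util1_single B1 B2 w1 w2) \<in> borel_measurable (N \<Otimes>\<^sub>M M)"
  unfolding split_beta' by measurable

lemma measurable_case_prod_util1_two:
  fixes N M :: "(real \<times> real) measure"
  assumes "sets N = sets borel" "sets M = sets borel"
  shows "case_prod (util1_two B1 B2 v11 v12 v21 v22) \<in> borel_measurable (N \<Otimes>\<^sub>M M)"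
proof -
  note [measurable_cong] = assms[unfolded borel_prod[symmetric]]
  show ?thesis
    unfolding split_beta' util1_two_def by measurable
qed

lemma integrable_pair_util1_single:
  assumes "mixed_single B N" "mixed_single B' M"
  shows "integrable (N \<Otimes>\<^sub>M M) (case_prod (util1_single B1 B2 w1 w2))"
proof -
  have N: "prob_space N" "sets N = sets borel" "AE x in N. 0 \<le> x \<and> x \<le> B"
    and M: "prob_space M" "sets M = sets borel" "AE y in M. 0 \<le> y \<and> y \<le> B'"
    using assms unfolding mixed_single_def by auto
  note [measurable_cong] = N(2) M(2)
  show ?thesis
  proof (rule integrable_pair_measure_bounded[OF N(1) M(1) _ _ _ N(3) M(3)])
    show "\<bar>util1_single B1 B2 w1 w2 x y\<bar> \<le> \<bar>w1\<bar> + B" if "0 \<le> x \<and> x \<le> B" for x y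
      using abs_util1_single_le[of B1 B2 w1 w2 x y] that by simp
  qed (simp_all add: measurable_case_prod_util1_single N(2) M(2))
qed

lemma integrable_pair_util1_two:
  assumes "mixed_two B N" "mixed_two B' M"
  shows "integrable (N \<Otimes>\<^sub>M M) (case_prod (util1_two B1 B2 v11 v12 v21 v22))"
proof -
  have N: "prob_space N" "sets N = sets borel"
      "AE x in N. 0 \<le> fst x \<and> 0 \<le> snd x \<and> fst x + snd x \<le> B"
    and M: "prob_space M" "sets M = sets borel"
      "AE y in M. 0 \<le> fst y \<and> 0 \<le> snd y \<and> fst y + snd y \<le> B'"
    using assms unfolding mixed_two_def by auto
  note [measurable_cong] = N(2)[unfolded borel_prod[symmetric]] M(2)[unfolded borel_prod[symmetric]]
  show ?thesis
  proof (rule integrable_pair_measure_bounded[OF N(1) M(1) _ _ _ N(3) M(3)])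
    show "\<bar>util1_two B1 B2 v11 v12 v21 v22 x y\<bar> \<le> \<bar>v11\<bar> + \<bar>v12\<bar> + B"
      if "0 \<le> fst x \<and> 0 \<le> snd x \<and> fst x + snd x \<le> B" for x y
      using abs_util1_single_le[of B1 B2 v11 v21 "fst x" "fst y"]
        abs_util1_single_le[of B1 B2 v12 v22 "snd x" "snd y"] that
      unfolding util1_two_def by linarith
  qed (simp_all add: measurable_case_prod_util1_two N(2) M(2))
qed

lemma exp_util2_two_swap:
  assumes "mixed_two B N" "mixed_two B' M"
  shows "exp_util (util2_two B1 B2 v11 v12 v21 v22) M N =
    exp_util (util1_two B2 B1 v21 v22 v11 v12) N M"
proof -
  have "util2_two B1 B2 v11 v12 v21 v22 = (\<lambda>y x. util1_two B2 B1 v21 v22 v11 v12 x y)"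
    by (simp add: fun_eq_iff util2_two_swap)
  then show ?thesis
    using assms unfolding mixed_two_def
    by (simp add: exp_util_swap measurable_case_prod_util1_two)
qed

section \<open>The uniform bid and the uniform budget split\<close>

definition uniform01 :: "real measure" where
  "uniform01 = uniform_measure lborel {0..1}"

lemma prob_space_uniform01: "prob_space uniform01"
  unfolding uniform01_def by (rule prob_space_uniform_measure) auto

lemma sets_uniform01[simp, measurable_cong]: "sets uniform01 = sets borel"
  unfolding uniform01_def by simp

lemma space_uniform01[simp]: "space uniform01 = UNIV"
  unfolding uniform01_def by simp

lemma AE_uniform01: "AE w in uniform01. 0 \<le> w \<and> w \<le> 1 \<and> w \<noteq> c"
  unfolding uniform01_def using AE_lborel_singleton[of c]
  by (subst AE_uniform_measure) (auto elim: eventually_mono)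

lemma measure_uniform01_lessThan:
  assumes "0 \<le> a" "a \<le> 1"
  shows "measure uniform01 {..<a} = a"
proof -
  have "{0..1} \<inter> {..<a} = {0..<a}" using assms by auto
  then show ?thesis
    unfolding uniform01_def using assms by simp
qed

lemma measure_uniform01_greaterThan:
  assumes "0 \<le> a" "a \<le> 1"
  shows "measure uniform01 {a<..} = 1 - a"
proof -
  have "{0..1} \<inter> {a<..} = {a<..1}" using assms by auto
  then show ?thesis
    unfolding uniform01_def using assms by simp
qed

lemma mixed_single_uniform01: "mixed_single 1 uniform01"
  unfolding mixed_single_def using prob_space_uniform01 AE_uniform01[of 0]
  by (auto elim: eventually_mono)

lemma integral_win1_uniform01:
  assumes "0 \<le> a" "a \<le> 1"
  shows "(\<integral>y. win1 B1 B2 w1 w2 a y \<partial>uniform01) = a"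
    and "(\<integral>y. win1 B1 B2 w1 w2 a (1 - y) \<partial>uniform01) = a"
proof -
  have "AE y in uniform01. win1 B1 B2 w1 w2 a y = indicator {..<a} y"
    using AE_uniform01[of a]
    by eventually_elim (simp add: win1_distinct_bids split: split_indicator)
  then have "(\<integral>y. win1 B1 B2 w1 w2 a y \<partial>uniform01) = (\<integral>y. indicator {..<a} y \<partial>uniform01)"
    by (intro integral_cong_AE) simp_all
  also have "\<dots> = a"
    using measure_uniform01_lessThan[OF assms] by simp
  finally show "(\<integral>y. win1 B1 B2 w1 w2 a y \<partial>uniform01) = a" .
  have "AE y in uniform01. win1 B1 B2 w1 w2 a (1 - y) = indicator {1 - a<..} y"
    using AE_uniform01[of "1 - a"]
    by eventually_elim (auto simp: win1_distinct_bids split: split_indicator)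
  then have "(\<integral>y. win1 B1 B2 w1 w2 a (1 - y) \<partial>uniform01) = (\<integral>y. indicator {1 - a<..} y \<partial>uniform01)"
    by (intro integral_cong_AE) simp_all
  also have "\<dots> = a"
    using measure_uniform01_greaterThan[of "1 - a"] assms by simp
  finally show "(\<integral>y. win1 B1 B2 w1 w2 a (1 - y) \<partial>uniform01) = a" .
qed

lemma integral_util1_single_uniform01:
  assumes "0 \<le> a" "a \<le> 1"
  shows "(\<integral>y. util1_single B1 B2 w1 w2 a y \<partial>uniform01) = (w1 - 1) * a"
    and "(\<integral>y. util1_single B1 B2 w1 w2 a (1 - y) \<partial>uniform01) = (w1 - 1) * a"
proof -
  interpret prob_space uniform01 by (rule prob_space_uniform01)
  note win = integrable_win1[OF finite_measure, of "\<lambda>y. y"]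
    integrable_win1[OF finite_measure, of "\<lambda>y. 1 - y"]
  show "(\<integral>y. util1_single B1 B2 w1 w2 a y \<partial>uniform01) = (w1 - 1) * a"
    unfolding util1_single_def using win integral_win1_uniform01[OF assms] prob_space
    by (simp add: algebra_simps)
  show "(\<integral>y. util1_single B1 B2 w1 w2 a (1 - y) \<partial>uniform01) = (w1 - 1) * a"
    unfolding util1_single_def using win integral_win1_uniform01[OF assms] prob_space
    by (simp add: algebra_simps)
qed

definition uniform_budget_split :: "(real \<times> real) measure" where
  "uniform_budget_split = distr uniform01 (borel \<Otimes>\<^sub>M borel) (\<lambda>w. (w, 1 - w))"

lemma prob_space_uniform_budget_split: "prob_space uniform_budget_split"
  unfolding uniform_budget_split_def
  by (rule prob_space.prob_space_distr[OF prob_space_uniform01]) simp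

lemma sets_uniform_budget_split[simp]:
  "sets uniform_budget_split = sets (borel \<Otimes>\<^sub>M borel)"
  unfolding uniform_budget_split_def by simp

lemma AE_uniform_budget_split:
  "AE x in uniform_budget_split. 0 \<le> fst x \<and> 0 \<le> snd x \<and> fst x + snd x = 1"
  unfolding uniform_budget_split_def using AE_uniform01[of 0]
  by (subst AE_distr_iff) (auto elim: eventually_mono)

lemma mixed_two_uniform_budget_split: "mixed_two 1 uniform_budget_split"
proof -
  have "sets uniform_budget_split = sets borel"
    by (simp only: sets_uniform_budget_split borel_prod)
  then show ?thesis
    unfolding mixed_two_def using prob_space_uniform_budget_split AE_uniform_budget_split
    by (auto elim: eventually_mono)
qed

lemma marginal_uniform_budget_split: "marginal uniform_budget_split 1 = uniform01"
proof -
  have "marginal uniform_budget_split 1 = distr uniform01 borel (fst \<circ> (\<lambda>w. (w, 1 - w)))"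
    unfolding marginal_def uniform_budget_split_def if_P[OF refl]
    by (rule distr_distr) measurable
  also have "\<dots> = uniform01"
    unfolding comp_def fst_conv by (rule distr_id2) simp
  finally show ?thesis .
qed

lemma integral_util1_two_uniform_budget_split:
  assumes "0 \<le> fst x" "fst x \<le> 1" "0 \<le> snd x" "snd x \<le> 1"
  shows "(\<integral>y. util1_two B1 B2 v11 v12 v21 v22 x y \<partial>uniform_budget_split) =
    (v11 - 1) * fst x + (v12 - 1) * snd x"
proof -
  interpret prob_space uniform01 by (rule prob_space_uniform01)
  have "(\<integral>y. util1_two B1 B2 v11 v12 v21 v22 x y \<partial>uniform_budget_split) =
      (\<integral>w. util1_two B1 B2 v11 v12 v21 v22 x (w, 1 - w) \<partial>uniform01)"
    unfolding uniform_budget_split_def util1_two_def by (rule integral_distr) measurable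
  also have "\<dots> = (\<integral>w. util1_single B1 B2 v11 v21 (fst x) w \<partial>uniform01) +
      (\<integral>w. util1_single B1 B2 v12 v22 (snd x) (1 - w) \<partial>uniform01)"
    unfolding util1_two_def fst_conv snd_conv
    using integrable_util1_single_fixed_bid[OF finite_measure, of "\<lambda>w. w"]
      integrable_util1_single_fixed_bid[OF finite_measure, of "\<lambda>w. 1 - w"]
    by (intro Bochner_Integration.integral_add) simp_all
  also have "\<dots> = (v11 - 1) * fst x + (v12 - 1) * snd x"
    using assms by (simp add: integral_util1_single_uniform01)
  finally show ?thesis .
qed

lemma exp_util1_single_uniform01:
  assumes "mixed_single 1 N"
  shows "exp_util (util1_single B1 B2 w1 w2) N uniform01 = (\<integral>x. (w1 - 1) * x \<partial>N)"
proof -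
  have N: "prob_space N" "sets N = sets borel" "AE x in N. 0 \<le> x \<and> x \<le> 1"
    using assms unfolding mixed_single_def by auto
  show ?thesis
  proof (rule exp_util_iterated[OF N(1) prob_space_uniform01])
    show "integrable (N \<Otimes>\<^sub>M uniform01) (case_prod (util1_single B1 B2 w1 w2))"
      by (rule integrable_pair_util1_single[OF assms mixed_single_uniform01])
    show "(\<lambda>x. (w1 - 1) * x) \<in> borel_measurable N"
      unfolding measurable_cong_sets[OF N(2) refl] by measurable
    show "AE x in N. (\<integral>y. util1_single B1 B2 w1 w2 x y \<partial>uniform01) = (w1 - 1) * x"
      using N(3) by eventually_elim (simp add: integral_util1_single_uniform01)
  qed
qed

lemma exp_util1_two_uniform_budget_split:
  assumes "mixed_two 1 N"
  shows "exp_util (util1_two B1 B2 v11 v12 v21 v22) N uniform_budget_split =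
    (\<integral>x. (v11 - 1) * fst x + (v12 - 1) * snd x \<partial>N)"
proof -
  have N: "prob_space N" "sets N = sets borel"
      "AE x in N. 0 \<le> fst x \<and> 0 \<le> snd x \<and> fst x + snd x \<le> 1"
    using assms unfolding mixed_two_def by auto
  show ?thesis
  proof (rule exp_util_iterated[OF N(1) prob_space_uniform_budget_split])
    show "integrable (N \<Otimes>\<^sub>M uniform_budget_split) (case_prod (util1_two B1 B2 v11 v12 v21 v22))"
      by (rule integrable_pair_util1_two[OF assms mixed_two_uniform_budget_split])
    show "(\<lambda>x. (v11 - 1) * fst x + (v12 - 1) * snd x) \<in> borel_measurable N"
      unfolding measurable_cong_sets[OF N(2)[unfolded borel_prod[symmetric]] refl] by measurable
    show "AE x in N. (\<integral>y. util1_two B1 B2 v11 v12 v21 v22 x y \<partial>uniform_budget_split) =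
        (v11 - 1) * fst x + (v12 - 1) * snd x"
      using N(3) by eventually_elim (rule integral_util1_two_uniform_budget_split; linarith)
  qed
qed

lemma integral_total_bid_le_budget:
  assumes "mixed_two B N"
  shows "(\<integral>x. fst x + snd x \<partial>N) \<le> B"
proof -
  interpret prob_space N
    using assms unfolding mixed_two_def by simp
  have budget: "AE x in N. 0 \<le> fst x + snd x \<and> fst x + snd x \<le> B"
    using assms unfolding mixed_two_def by (auto elim: eventually_mono)
  then have "AE x in N. 0 \<le> B"
    by eventually_elim simp
  then have "0 \<le> B"
    by simp
  then have "(\<integral>x. fst x + snd x \<partial>N) \<le> (\<integral>x. B \<partial>N)"
    using budget by (intro integral_mono_AE') (auto elim: eventually_mono)
  then show ?thesis
    using prob_space by simp
qed

lemma nash_two_uniform_budget_split: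
  "nash_two 1 1 2 2 1 1 uniform_budget_split uniform_budget_split"
proof -
  let ?S = uniform_budget_split
  have payoff1: "exp_util (util1_two 1 1 2 2 1 1) N ?S = (\<integral>x. fst x + snd x \<partial>N)"
    if "mixed_two 1 N" for N
    using exp_util1_two_uniform_budget_split[OF that, of 1 1 2 2 1 1] by simp
  have payoff2: "exp_util (util2_two 1 1 2 2 1 1) ?S N = 0" if "mixed_two 1 N" for N
    using exp_util2_two_swap[OF that mixed_two_uniform_budget_split]
      exp_util1_two_uniform_budget_split[OF that, of 1 1 1 1 2 2]
    by simp
  have "(\<integral>x. fst x + snd x \<partial>?S) = (\<integral>x. 1 \<partial>?S)"
    using AE_uniform_budget_split
    by (intro integral_cong_AE)
      (auto simp: measurable_cong_sets[OF sets_uniform_budget_split refl] elim: eventually_mono)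
  then have "exp_util (util1_two 1 1 2 2 1 1) ?S ?S = 1"
    using payoff1[OF mixed_two_uniform_budget_split]
      prob_space.prob_space[OF prob_space_uniform_budget_split]
    by simp
  then show ?thesis
    unfolding nash_two_def nash_def
    using mixed_two_uniform_budget_split payoff1 payoff2 integral_total_bid_le_budget
    by auto
qed

lemma not_nash_single_uniform01: "\<not> nash_single 1 1 2 1 uniform01 uniform01"
proof
  assume "nash_single 1 1 2 1 uniform01 uniform01"
  moreover have bid_one: "mixed_single 1 (return borel 1)"
    unfolding mixed_single_def by (auto intro: prob_space_return simp: AE_return)
  ultimately have "exp_util (util1_single 1 1 2 1) (return borel 1) uniform01 \<le>
      exp_util (util1_single 1 1 2 1) uniform01 uniform01"
    unfolding nash_single_def nash_def by blast
  moreover have "exp_util (util1_single 1 1 2 1) (return borel 1) uniform01 = 1"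
    using exp_util1_single_uniform01[OF bid_one] by (simp add: integral_return)
  moreover have "exp_util (util1_single 1 1 2 1) uniform01 uniform01 < 1"
  proof -
    interpret prob_space uniform01 by (rule prob_space_uniform01)
    have "integrable uniform01 (\<lambda>x. x)"
      using AE_uniform01[of 0] by (intro integrable_const_bound[of _ 1]) (auto elim: eventually_mono)
    then have "(\<integral>x. x \<partial>uniform01) < (\<integral>x. 1 \<partial>uniform01)"
      using AE_uniform01[of 1] emeasure_space_1
      by (intro integral_less_AE_space) (auto elim: eventually_mono)
    then show ?thesis
      using exp_util1_single_uniform01[OF mixed_single_uniform01] prob_space by simp
  qed
  ultimately show False by simp
qed

theorem corollary1:
  shows "\<exists>B1 B2 v11 v12 v21 v22 M1 M2 (j::nat).
    0 \<le> B1 \<and> 0 \<le> B2 \<and> 0 < v11 \<and> 0 < v12 \<and> 0 < v21 \<and> 0 < v22 \<and>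
    nash_two B1 B2 v11 v12 v21 v22 M1 M2 \<and> j \<in> {1, 2} \<and>
    \<not> nash_single B1 B2 (if j = 1 then v11 else v12) (if j = 1 then v21 else v22)
        (marginal M1 j) (marginal M2 j)"
  using nash_two_uniform_budget_split not_nash_single_uniform01
  unfolding marginal_uniform_budget_split[symmetric]
  by (intro exI[of _ 1] exI[of _ 1] exI[of _ 2] exI[of _ 2] exI[of _ 1] exI[of _ 1]
      exI[of _ uniform_budget_split] exI[of _ uniform_budget_split] exI[of _ "1::nat"]) simp

end
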